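(* Let $\Omega=\mathbb{R}^{\mathbb{N}}$ with canonical process $(X_t)_{t\in\mathbb{N}}$, natural filtration $\mathcal{F}_t=\sigma(X_1,\dots,X_t)$ ($\mathcal{F}_0$ trivial), $\mathcal{F}=\sigma(\bigcup_t\mathcal{F}_t)$. Let $\mathcal{P}^\dagger$ be the set of all probability measures $\mathbb{P}$ on $\mathcal{F}$ such that for every $t\in\mathbb{N}$ the conditional mean $\mu_t=\mathbb{E}_{\mathbb{P}}[X_t\mid\mathcal{F}_{t-1}]$ exists and is finite, $\sum_{i=1}^t\mu_i\le0$ $\mathbb{P}$-a.s., and $\mathbb{E}_{\mathbb{P}}[e^{\lambda(X_t-\mu_t)}\mid\mathcal{F}_{t-1}]\le e^{\lambda^2/2}$ $\mathbb{P}$-a.s. for all $\lambda\in\mathbb{R}$. Let $A^{>0}=\big\{\limsup_{t\to\infty}\frac1t\sum_{s=1}^tX_s>0\big\}$. Then $\mu^*(A^{>0})=0$ (with $\mu^*$ computed with respect to $\mathcal{P}^\dagger$); in particular this also holds for the smaller family $\mathcal{P}^{\le0}\subseteq\mathcal{P}^\dagger$ in which each $\mu_t\le0$.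
   Context: Stopping times are with respect to the filtration above (values in $\mathbb{N}_0\cup\{\infty\}$) and $\mathcal{T}$ is the set of all stopping times. Inverse-capital measure with respect to a family $\mathcal{Q}$: $\mu^*(B) = \inf_{\tau\in\mathcal{T}:\, B\subseteq\{\tau<\infty\}} \sup_{\mathbb{P}\in\mathcal{Q}} \mathbb{P}(\tau<\infty)$ for $B\subseteq\Omega$. *)

theory Defs
  imports "HOL-Probability.Probability"
begin

text \<open>Sample space: \<Omega> = real sequences, coded as nat => real.
  The coordinate process is 1-based: X_t(w) = w (t - 1) for t >= 1.\<close>

definition Xc :: "nat \<Rightarrow> (nat \<Rightarrow> real) \<Rightarrow> real" where
  "Xc t \<omega> = \<omega> (t - 1)"

definition filt :: "nat \<Rightarrow> (nat \<Rightarrow> real) measure" where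
  "filt t = sigma UNIV {{\<omega>. Xc s \<omega> \<in> B} | s B. 1 \<le> s \<and> s \<le> t \<and> B \<in> sets borel}"

definition Fall :: "(nat \<Rightarrow> real) measure" where
  "Fall = sigma UNIV (\<Union>t. sets (filt t))"

definition stopping_time_filt :: "((nat \<Rightarrow> real) \<Rightarrow> enat) \<Rightarrow> bool" where
  "stopping_time_filt \<tau> \<longleftrightarrow> (\<forall>n::nat. {\<omega>. \<tau> \<omega> \<le> enat n} \<in> sets (filt n))"

text \<open>Generalized conditional expectation E_P[X_t | F_{t-1}], defined as
  E[X_t^+ | F_{t-1}] - E[X_t^- | F_{t-1}] (meaningful where both are finite).\<close>
definition cmean :: "(nat \<Rightarrow> real) measure \<Rightarrow> nat \<Rightarrow> (nat \<Rightarrow> real) \<Rightarrow> real" where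
  "cmean P t \<omega> =
     enn2real (nn_cond_exp P (filt (t - 1)) (\<lambda>w. ennreal (Xc t w)) \<omega>)
   - enn2real (nn_cond_exp P (filt (t - 1)) (\<lambda>w. ennreal (- Xc t w)) \<omega>)"

definition cmean_exists_finite :: "(nat \<Rightarrow> real) measure \<Rightarrow> nat \<Rightarrow> bool" where
  "cmean_exists_finite P t \<longleftrightarrow>
     (AE \<omega> in P. nn_cond_exp P (filt (t - 1)) (\<lambda>w. ennreal (Xc t w)) \<omega> < \<infinity>
               \<and> nn_cond_exp P (filt (t - 1)) (\<lambda>w. ennreal (- Xc t w)) \<omega> < \<infinity>)"

definition Pdag :: "(nat \<Rightarrow> real) measure set" where
  "Pdag = {P. prob_space P \<and> sets P = sets Fall \<and>
     (\<forall>t\<ge>1. cmean_exists_finite P t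
        \<and> (AE \<omega> in P. (\<Sum>i=1..t. cmean P i \<omega>) \<le> 0)
        \<and> (\<forall>l::real. AE \<omega> in P.
              nn_cond_exp P (filt (t - 1))
                 (\<lambda>w. ennreal (exp (l * (Xc t w - cmean P t w)))) \<omega>
              \<le> ennreal (exp (l\<^sup>2 / 2))))}"

definition Ple0 :: "(nat \<Rightarrow> real) measure set" where
  "Ple0 = {P \<in> Pdag. \<forall>t\<ge>1. AE \<omega> in P. cmean P t \<omega> \<le> 0}"

definition inv_cap :: "(nat \<Rightarrow> real) measure set \<Rightarrow> (nat \<Rightarrow> real) set \<Rightarrow> ennreal" where
  "inv_cap Q B = (INF \<tau> \<in> {\<tau>. stopping_time_filt \<tau> \<and> B \<subseteq> {\<omega>. \<tau> \<omega> < \<infinity>}}.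
                    SUP P \<in> Q. emeasure P {\<omega>. \<tau> \<omega> < \<infinity>})"

definition Apos :: "(nat \<Rightarrow> real) set" where
  "Apos = {\<omega>. limsup (\<lambda>t. ereal ((\<Sum>s=1..t. Xc s \<omega>) / real t)) > 0}"

end

theory Submission
  imports Defs
begin

text \<open>For \<lambda> > 0 the process exp(\<lambda> (X_1 - \<mu>_1 + ... + X_t - \<mu>_t) - \<lambda>^2 t/2) is, by the
  sub-Gaussian hypothesis, a nonnegative supermartingale starting at 1 under every P in Pdag,
  so by Ville's inequality it ever reaches level r with probability at most 1/r.  Since
  \<mu>_1 + ... + \<mu>_t \<le> 0, the same bound holds for exp(\<lambda> S_t - \<lambda>^2 t/2), where S_t is the
  t-th partial sum of X; and if limsup S_t/t > \<lambda>, this process is unbounded.  Stopping at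
  the first time one of the processes with \<lambda> = 1/(k+1) exceeds 2^(k+1)/\<epsilon> therefore covers
  Apos by an event of probability at most \<Sum>_k \<epsilon>/2^(k+1) = \<epsilon>, uniformly over Pdag.\<close>

locale nn_supermartingale =
  fixes M :: "'a measure" and F :: "nat \<Rightarrow> 'a measure" and Z :: "nat \<Rightarrow> 'a \<Rightarrow> ennreal"
  assumes subalgebra_F: "subalgebra M (F n)"
    and sets_F_mono: "m \<le> n \<Longrightarrow> sets (F m) \<subseteq> sets (F n)"
    and adapted: "Z n \<in> borel_measurable (F n)"
    and supermartingale: "A \<in> sets (F n) \<Longrightarrow> (\<integral>\<^sup>+x\<in>A. Z (Suc n) x \<partial>M) \<le> (\<integral>\<^sup>+x\<in>A. Z n x \<partial>M)"
begin

lemma space_F: "space (F n) = space M"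
  using subalgebra_F by (simp add: subalgebra_def)

lemma sets_F_subset: "sets (F n) \<subseteq> sets M"
  using subalgebra_F by (simp add: subalgebra_def)

lemma borel_measurable_Z [measurable]: "Z n \<in> borel_measurable M"
  using measurable_from_subalg[OF subalgebra_F adapted] .

lemma borel_measurable_Z_F: "m \<le> n \<Longrightarrow> Z m \<in> borel_measurable (F n)"
  using measurable_from_subalg[OF _ adapted] sets_F_mono space_F by (auto simp: subalgebra_def)

definition first_crossing :: "ennreal \<Rightarrow> nat \<Rightarrow> 'a set" where
  "first_crossing c n = {x\<in>space M. c \<le> Z n x \<and> (\<forall>m<n. Z m x < c)}"

lemma first_crossing_in_F: "first_crossing c n \<in> sets (F n)"
proof -
  have "first_crossing c n = {x\<in>space (F n). c \<le> Z n x} \<inter> {x\<in>space (F n). \<forall>m\<in>{..<n}. Z m x < c}"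
    unfolding first_crossing_def space_F by auto
  also have "\<dots> \<in> sets (F n)"
  proof (rule sets.Int)
    show "{x\<in>space (F n). c \<le> Z n x} \<in> sets (F n)"
      using adapted[of n] by measurable
    show "{x\<in>space (F n). \<forall>m\<in>{..<n}. Z m x < c} \<in> sets (F n)"
    proof (rule sets.sets_Collect_finite_All)
      fix m assume "m \<in> {..<n}"
      then have [measurable]: "Z m \<in> borel_measurable (F n)"
        by (simp add: borel_measurable_Z_F)
      show "{x\<in>space (F n). Z m x < c} \<in> sets (F n)" by measurable
    qed simp
  qed
  finally show ?thesis .
qed

lemma first_crossing_in_sets [measurable]: "first_crossing c n \<in> sets M"
  using first_crossing_in_F sets_F_subset by blast

lemma disjoint_family_first_crossing: "disjoint_family (first_crossing c)"
  unfolding disjoint_family_on_def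
proof (intro ballI impI)
  fix m n :: nat assume "m \<noteq> n"
  then show "first_crossing c m \<inter> first_crossing c n = {}"
    unfolding first_crossing_def by (cases m n rule: linorder_cases) (auto dest: leD)
qed

lemma crossing_before_eq_UN_first_crossing:
  "{x\<in>space M. \<exists>n\<le>N. c \<le> Z n x} = (\<Union>n\<le>N. first_crossing c n)"
proof (intro equalityI subsetI)
  fix x assume "x \<in> {x\<in>space M. \<exists>n\<le>N. c \<le> Z n x}"
  then obtain n where n: "n \<le> N" "c \<le> Z n x" "x \<in> space M" by auto
  define k where "k = (LEAST k. c \<le> Z k x)"
  have "c \<le> Z k x" "k \<le> n" "\<forall>m<k. Z m x < c"
    using LeastI[of _ n] Least_le[of _ n] not_less_Least[of _ "\<lambda>k. c \<le> Z k x"] n(2)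
    unfolding k_def by (auto simp: not_le)
  with n show "x \<in> (\<Union>n\<le>N. first_crossing c n)"
    unfolding first_crossing_def by (auto intro!: bexI[of _ k])
qed (auto simp: first_crossing_def)

text \<open>The left-hand side is the integral of Z stopped at the first crossing of level c or at
  time N, whichever comes first; optional stopping for this bounded stopping time.\<close>

lemma stopped_integral_le:
  "(\<Sum>n\<le>N. \<integral>\<^sup>+x\<in>first_crossing c n. Z n x \<partial>M)
     + (\<integral>\<^sup>+x\<in>space M - (\<Union>n\<le>N. first_crossing c n). Z N x \<partial>M)
   \<le> (\<integral>\<^sup>+x. Z 0 x \<partial>M)"
proof (induction N)
  case 0
  have "(\<integral>\<^sup>+x\<in>first_crossing c 0. Z 0 x \<partial>M) + (\<integral>\<^sup>+x\<in>space M - first_crossing c 0. Z 0 x \<partial>M)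
      = (\<integral>\<^sup>+x\<in>first_crossing c 0 \<union> (space M - first_crossing c 0). Z 0 x \<partial>M)"
    by (rule nn_integral_disjoint_pair[symmetric]) auto
  also have "\<dots> = (\<integral>\<^sup>+x. Z 0 x \<partial>M)"
    by (rule nn_integral_cong) (auto simp: indicator_def)
  finally show ?case by simp
next
  case (Suc N)
  let ?U = "\<lambda>N. \<Union>n\<le>N. first_crossing c n"
  have split: "space M - ?U N = first_crossing c (Suc N) \<union> (space M - ?U (Suc N))"
    unfolding first_crossing_def by (auto simp: atMost_Suc less_Suc_eq_le)
  have disj: "first_crossing c (Suc N) \<inter> (space M - ?U (Suc N)) = {}"
    by (auto simp: atMost_Suc)
  have "(\<integral>\<^sup>+x\<in>first_crossing c (Suc N). Z (Suc N) x \<partial>M) + (\<integral>\<^sup>+x\<in>space M - ?U (Suc N). Z (Suc N) x \<partial>M)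
      = (\<integral>\<^sup>+x\<in>space M - ?U N. Z (Suc N) x \<partial>M)"
    unfolding split by (rule nn_integral_disjoint_pair[symmetric, OF _ _ _ disj]) auto
  also have "\<dots> \<le> (\<integral>\<^sup>+x\<in>space M - ?U N. Z N x \<partial>M)"
  proof (rule supermartingale)
    have "?U N \<in> sets (F N)"
      by (intro sets.finite_UN) (auto intro: subsetD[OF sets_F_mono first_crossing_in_F])
    then show "space M - ?U N \<in> sets (F N)"
      by (metis sets.compl_sets space_F)
  qed
  finally show ?case
    using order_trans[OF add_left_mono Suc.IH] by (simp add: add.assoc)
qed

lemma crossing_before_bound:
  "c * emeasure M {x\<in>space M. \<exists>n\<le>N. c \<le> Z n x} \<le> (\<integral>\<^sup>+x. Z 0 x \<partial>M)"
proof -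
  have "emeasure M (\<Union>n\<le>N. first_crossing c n) = (\<Sum>n\<le>N. emeasure M (first_crossing c n))"
    by (rule sum_emeasure[symmetric])
       (auto intro: disjoint_family_on_mono[OF _ disjoint_family_first_crossing])
  then have "c * emeasure M {x\<in>space M. \<exists>n\<le>N. c \<le> Z n x} = (\<Sum>n\<le>N. c * emeasure M (first_crossing c n))"
    unfolding crossing_before_eq_UN_first_crossing by (simp add: sum_distrib_left)
  also have "\<dots> \<le> (\<Sum>n\<le>N. \<integral>\<^sup>+x\<in>first_crossing c n. Z n x \<partial>M)"
  proof (rule sum_mono)
    fix n
    have "c * emeasure M (first_crossing c n) = (\<integral>\<^sup>+x\<in>first_crossing c n. c \<partial>M)"
      by (simp add: nn_integral_cmult_indicator)
    also have "\<dots> \<le> (\<integral>\<^sup>+x\<in>first_crossing c n. Z n x \<partial>M)"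
      by (intro nn_integral_mono) (auto simp: first_crossing_def indicator_def)
    finally show "c * emeasure M (first_crossing c n) \<le> \<dots>" .
  qed
  also have "\<dots> \<le> (\<Sum>n\<le>N. \<integral>\<^sup>+x\<in>first_crossing c n. Z n x \<partial>M)
      + (\<integral>\<^sup>+x\<in>space M - (\<Union>n\<le>N. first_crossing c n). Z N x \<partial>M)"
    by simp
  also have "\<dots> \<le> (\<integral>\<^sup>+x. Z 0 x \<partial>M)"
    by (rule stopped_integral_le)
  finally show ?thesis .
qed

theorem ville_inequality:
  "c * emeasure M {x\<in>space M. \<exists>n. c \<le> Z n x} \<le> (\<integral>\<^sup>+x. Z 0 x \<partial>M)"
proof -
  let ?U = "\<lambda>N. {x\<in>space M. \<exists>n\<le>N. c \<le> Z n x}"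
  have "range ?U \<subseteq> sets M"
    unfolding crossing_before_eq_UN_first_crossing by auto
  moreover have "incseq ?U"
    by (auto simp: incseq_def intro: order_trans)
  moreover have "{x\<in>space M. \<exists>n. c \<le> Z n x} = (\<Union>N. ?U N)"
    by auto
  ultimately have "c * emeasure M {x\<in>space M. \<exists>n. c \<le> Z n x} = c * (SUP N. emeasure M (?U N))"
    by (simp add: SUP_emeasure_incseq)
  also have "\<dots> = (SUP N. c * emeasure M (?U N))"
    by (simp add: SUP_mult_left_ennreal)
  also have "\<dots> \<le> (\<integral>\<^sup>+x. Z 0 x \<partial>M)"
    by (rule SUP_least) (rule crossing_before_bound)
  finally show ?thesis .
qed

end

lemma space_filt [simp]: "space (filt n) = UNIV"
  unfolding filt_def by (simp add: space_measure_of_conv)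

lemma sets_filt:
  "sets (filt n) = sigma_sets UNIV {{\<omega>. Xc s \<omega> \<in> B} | s B. 1 \<le> s \<and> s \<le> n \<and> B \<in> sets borel}"
  unfolding filt_def by (rule sets_measure_of) auto

lemma sets_filt_mono: "m \<le> n \<Longrightarrow> sets (filt m) \<subseteq> sets (filt n)"
  unfolding sets_filt by (rule sigma_sets_mono') (auto intro: order_trans)

lemma sets_Fall: "sets Fall = sigma_sets UNIV (\<Union>t. sets (filt t))"
  unfolding Fall_def by (rule sets_measure_of) auto

lemma sets_filt_subset_Fall: "sets (filt n) \<subseteq> sets Fall"
  unfolding sets_Fall by (auto intro: sigma_sets.Basic)

lemma subalgebra_filt: "sets P = sets Fall \<Longrightarrow> subalgebra P (filt n)"
  using sets_filt_subset_Fall[of n] sets_eq_imp_space_eq[of P Fall]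
  by (simp add: subalgebra_def Fall_def space_measure_of_conv)

lemma borel_measurable_Xc_filt: "1 \<le> s \<Longrightarrow> s \<le> n \<Longrightarrow> Xc s \<in> borel_measurable (filt n)"
  by (rule measurableI) (auto simp: sets_filt intro!: sigma_sets.Basic)

lemma borel_measurable_cmean_filt: "cmean P t \<in> borel_measurable (filt (t - 1))"
  unfolding cmean_def by measurable

lemma borel_measurable_centered_filt:
  assumes "1 \<le> i" "i \<le> n"
  shows "(\<lambda>\<omega>. Xc i \<omega> - cmean P i \<omega>) \<in> borel_measurable (filt n)"
proof -
  have "cmean P i \<in> borel_measurable (filt n)"
    using assms by (intro measurable_from_subalg[OF _ borel_measurable_cmean_filt])
      (auto simp: subalgebra_def sets_filt_mono)
  with borel_measurable_Xc_filt[OF assms] show ?thesis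
    by measurable
qed

definition partial_sum :: "nat \<Rightarrow> (nat \<Rightarrow> real) \<Rightarrow> real" where
  "partial_sum n \<omega> = (\<Sum>s=1..n. Xc s \<omega>)"

lemma borel_measurable_partial_sum_filt: "partial_sum n \<in> borel_measurable (filt n)"
  unfolding partial_sum_def by (rule borel_measurable_sum) (auto intro: borel_measurable_Xc_filt)

lemma Pdag_prob_space: "P \<in> Pdag \<Longrightarrow> prob_space P"
  by (simp add: Pdag_def)

lemma sets_Pdag: "P \<in> Pdag \<Longrightarrow> sets P = sets Fall"
  by (simp add: Pdag_def)

lemma Pdag_AE_sum_cmean_nonpos:
  assumes "P \<in> Pdag"
  shows "AE \<omega> in P. \<forall>n. (\<Sum>i=1..n. cmean P i \<omega>) \<le> 0"
proof -
  have "AE \<omega> in P. (\<Sum>i=1..n. cmean P i \<omega>) \<le> 0" for n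
    using assms by (cases "n = 0") (auto simp: Pdag_def)
  then show ?thesis
    by (simp add: AE_all_countable)
qed

lemma Pdag_AE_cond_exp_exp_le:
  "P \<in> Pdag \<Longrightarrow> 1 \<le> t \<Longrightarrow> AE \<omega> in P.
     nn_cond_exp P (filt (t - 1)) (\<lambda>w. ennreal (exp (l * (Xc t w - cmean P t w)))) \<omega>
       \<le> ennreal (exp (l\<^sup>2 / 2))"
  by (simp add: Pdag_def)

definition exp_process :: "(nat \<Rightarrow> real) measure \<Rightarrow> real \<Rightarrow> nat \<Rightarrow> (nat \<Rightarrow> real) \<Rightarrow> ennreal" where
  "exp_process P l n \<omega> = ennreal (exp (l * (\<Sum>i=1..n. Xc i \<omega> - cmean P i \<omega>) - l\<^sup>2 * real n / 2))"

lemma exp_process_Suc: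
  "exp_process P l (Suc n) \<omega> = exp_process P l n \<omega> * ennreal (exp (- (l\<^sup>2 / 2)))
     * ennreal (exp (l * (Xc (Suc n) \<omega> - cmean P (Suc n) \<omega>)))"
  unfolding exp_process_def
  by (simp add: ennreal_mult'[symmetric] exp_add[symmetric] algebra_simps add_divide_distrib)

lemma borel_measurable_exp_process_filt: "exp_process P l n \<in> borel_measurable (filt n)"
proof -
  have "(\<lambda>\<omega>. \<Sum>i=1..n. Xc i \<omega> - cmean P i \<omega>) \<in> borel_measurable (filt n)"
    by (rule borel_measurable_sum) (auto intro: borel_measurable_centered_filt)
  then show ?thesis
    unfolding exp_process_def by measurable
qed

lemma exp_process_supermartingale:
  assumes P: "P \<in> Pdag" and A: "A \<in> sets (filt n)"
  shows "(\<integral>\<^sup>+x\<in>A. exp_process P l (Suc n) x \<partial>P) \<le> (\<integral>\<^sup>+x\<in>A. exp_process P l n x \<partial>P)"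
proof -
  interpret prob_space P using P by (rule Pdag_prob_space)
  interpret sigma_finite_subalgebra P "filt n"
    by (intro finite_measure_subalgebra_is_sigma_finite)
      (simp add: finite_measure_subalgebra_def finite_measure_subalgebra_axioms_def
        subalgebra_filt[OF sets_Pdag[OF P]] finite_measure_axioms)
  define W where "W = (\<lambda>x. ennreal (exp (l * (Xc (Suc n) x - cmean P (Suc n) x))))"
  define f where "f x = exp_process P l n x * indicator A x * ennreal (exp (- (l\<^sup>2 / 2)))" for x
  have "W \<in> borel_measurable P"
    using measurable_from_subalg[OF subalgebra_filt[OF sets_Pdag[OF P]]
        borel_measurable_centered_filt[of "Suc n" "Suc n"]]
    unfolding W_def by measurable
  moreover have "f \<in> borel_measurable (filt n)"
    using borel_measurable_exp_process_filt A unfolding f_def by measurable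
  ultimately have "(\<integral>\<^sup>+x. f x * W x \<partial>P) = (\<integral>\<^sup>+x. f x * nn_cond_exp P (filt n) W x \<partial>P)"
    by (simp add: nn_cond_exp_intg)
  also have "\<dots> \<le> (\<integral>\<^sup>+x. f x * ennreal (exp (l\<^sup>2 / 2)) \<partial>P)"
    using Pdag_AE_cond_exp_exp_le[OF P, of "Suc n" l]
    by (intro nn_integral_mono_AE) (auto simp: W_def elim!: eventually_mono intro: mult_left_mono)
  also have "\<dots> = (\<integral>\<^sup>+x\<in>A. exp_process P l n x \<partial>P)"
    by (simp add: f_def mult.assoc ennreal_mult'[symmetric] exp_minus)
  finally show ?thesis
    by (simp add: exp_process_Suc f_def W_def mult_ac)
qed

lemma nn_supermartingale_exp_process:
  assumes "P \<in> Pdag"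
  shows "nn_supermartingale P filt (exp_process P l)"
proof
  show "subalgebra P (filt n)" for n
    using assms by (intro subalgebra_filt sets_Pdag)
qed (use assms sets_filt_mono borel_measurable_exp_process_filt exp_process_supermartingale in auto)

text \<open>Where the conditional means have nonpositive partial sums, exp(l S_n - l^2 n/2) is
  dominated by exp_process, whose initial value is 1.\<close>

lemma emeasure_exp_partial_sum_crossing_le:
  assumes P: "P \<in> Pdag" and l: "0 < l" and r: "0 < r"
  shows "emeasure P {\<omega>. \<exists>n. r \<le> exp (l * partial_sum n \<omega> - l\<^sup>2 * real n / 2)} \<le> ennreal (1 / r)"
proof -
  interpret prob_space P using P by (rule Pdag_prob_space)
  interpret nn_supermartingale P filt "exp_process P l"
    using P by (rule nn_supermartingale_exp_process)
  let ?B = "{x\<in>space P. \<exists>n. ennreal r \<le> exp_process P l n x}"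
  have "emeasure P {\<omega>. \<exists>n. r \<le> exp (l * partial_sum n \<omega> - l\<^sup>2 * real n / 2)} \<le> emeasure P ?B"
  proof (rule emeasure_mono_AE)
    show "?B \<in> sets P" by measurable
    show "AE x in P. x \<in> {\<omega>. \<exists>n. r \<le> exp (l * partial_sum n \<omega> - l\<^sup>2 * real n / 2)} \<longrightarrow> x \<in> ?B"
      using Pdag_AE_sum_cmean_nonpos[OF P]
    proof (eventually_elim, intro impI)
      fix x assume s: "\<forall>n. (\<Sum>i=1..n. cmean P i x) \<le> 0"
        and "x \<in> {\<omega>. \<exists>n. r \<le> exp (l * partial_sum n \<omega> - l\<^sup>2 * real n / 2)}"
      then obtain n where h: "r \<le> exp (l * partial_sum n x - l\<^sup>2 * real n / 2)"
        by blast
      have "l * partial_sum n x \<le> l * (\<Sum>i=1..n. Xc i x - cmean P i x)"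
        using s l unfolding partial_sum_def sum_subtractf by (intro mult_left_mono) auto
      with h have "ennreal r \<le> exp_process P l n x"
        unfolding exp_process_def by (intro ennreal_leI) (meson diff_right_mono exp_le_cancel_iff order_trans)
      then show "x \<in> ?B"
        using sets_eq_imp_space_eq[OF sets_Pdag[OF P]] by (auto simp: Fall_def space_measure_of_conv)
    qed
  qed
  also have "\<dots> \<le> ennreal (1 / r)"
  proof -
    have "ennreal r * emeasure P ?B \<le> (\<integral>\<^sup>+x. exp_process P l 0 x \<partial>P)"
      by (rule ville_inequality)
    also have "\<dots> = 1"
      by (simp add: exp_process_def emeasure_space_1)
    finally have "ennreal (1 / r) * (ennreal r * emeasure P ?B) \<le> ennreal (1 / r)"
      using mult_left_mono[of _ 1 "ennreal (1 / r)"] by fastforce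
    moreover have "ennreal (1 / r) * ennreal r = 1"
      using r by (simp add: ennreal_mult'[symmetric])
    ultimately show ?thesis
      by (simp add: mult.assoc[symmetric])
  qed
  finally show ?thesis .
qed

text \<open>Whenever s t \<ge> l t, the exponent is at least l^2 t/2.\<close>

lemma exp_crossing_of_less_limsup:
  fixes s :: "nat \<Rightarrow> real"
  assumes l: "0 < l" and lim: "ereal l < limsup (\<lambda>t. ereal (s t / real t))"
  shows "\<exists>t. R \<le> exp (l * s t - l\<^sup>2 * real t / 2)"
proof -
  obtain y where y: "y > ereal l" "\<not> eventually (\<lambda>t. y > ereal (s t / real t)) sequentially"
    using lim unfolding not_le[symmetric] Limsup_le_iff by blast
  have "frequently (\<lambda>t. l < s t / real t) sequentially"
    using y(2) unfolding not_eventually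
    by (rule frequently_elim1) (metis y(1) less_ereal.simps(1) less_le_trans not_less)
  moreover obtain N :: nat where N: "2 * R / l\<^sup>2 \<le> real N"
    using real_arch_simple by blast
  ultimately obtain t where t: "N \<le> t" "l < s t / real t"
    unfolding frequently_sequentially by blast
  have "0 < real t"
    using t(2) l by (cases "t = 0") auto
  then have "l * (l * real t) \<le> l * s t"
    using t(2) l by (intro mult_left_mono) (auto simp: field_simps)
  moreover have "R \<le> l\<^sup>2 * real t / 2"
  proof -
    have "2 * R / l\<^sup>2 \<le> real t"
      using N t(1) by (meson of_nat_le_iff order_trans)
    then show ?thesis
      using l by (simp add: pos_divide_le_eq mult.commute)
  qed
  ultimately have "R \<le> 1 + (l * s t - l\<^sup>2 * real t / 2)"
    by (simp add: power2_eq_square)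
  then show ?thesis
    using exp_ge_add_one_self order_trans by blast
qed

definition hitting_time :: "(nat \<Rightarrow> 'a set) \<Rightarrow> 'a \<Rightarrow> enat" where
  "hitting_time H \<omega> = (if \<exists>t. \<omega> \<in> H t then enat (LEAST t. \<omega> \<in> H t) else \<infinity>)"

lemma hitting_time_less_infinity_iff: "hitting_time H \<omega> < \<infinity> \<longleftrightarrow> (\<exists>t. \<omega> \<in> H t)"
  by (simp add: hitting_time_def)

lemma hitting_time_le_iff: "hitting_time H \<omega> \<le> enat n \<longleftrightarrow> (\<exists>t\<le>n. \<omega> \<in> H t)"
  unfolding hitting_time_def
  by (auto intro: LeastI Least_le order_trans)

lemma stopping_time_filt_hitting_time:
  assumes "\<And>t. H t \<in> sets (filt t)"
  shows "stopping_time_filt (hitting_time H)"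
  unfolding stopping_time_filt_def hitting_time_le_iff
proof
  fix n
  have "(\<Union>t\<le>n. H t) \<in> sets (filt n)"
    using assms sets_filt_mono by (intro sets.finite_UN) auto
  moreover have "{\<omega>. \<exists>t\<le>n. \<omega> \<in> H t} = (\<Union>t\<le>n. H t)"
    by blast
  ultimately show "{\<omega>. \<exists>t\<le>n. \<omega> \<in> H t} \<in> sets (filt n)"
    by simp
qed

lemma emeasure_UN_le_of_le_geometric:
  assumes "\<And>k. E k \<in> sets M" and "\<And>k. emeasure M (E k) \<le> ennreal (\<epsilon> * (1/2) ^ Suc k)" and "0 \<le> \<epsilon>"
  shows "emeasure M (\<Union>k. E k) \<le> ennreal \<epsilon>"
proof -
  have geo: "(\<lambda>k. \<epsilon> * (1/2) ^ Suc k) sums \<epsilon>"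
    using sums_mult[OF power_half_series, of \<epsilon>] by simp
  have "emeasure M (\<Union>k. E k) \<le> (\<Sum>k. emeasure M (E k))"
    using assms(1) by (intro emeasure_subadditive_countably) auto
  also have "\<dots> \<le> (\<Sum>k. ennreal (\<epsilon> * (1/2) ^ Suc k))"
    using assms(2) by (intro suminf_le) auto
  also have "\<dots> = ennreal \<epsilon>"
    using geo assms(3) by (simp add: suminf_ennreal2 sums_summable sums_unique[symmetric])
  finally show ?thesis .
qed

lemma Apos_small_stopping_time:
  assumes \<epsilon>: "0 < \<epsilon>"
  shows "\<exists>\<tau>. stopping_time_filt \<tau> \<and> Apos \<subseteq> {\<omega>. \<tau> \<omega> < \<infinity>}
           \<and> (\<forall>P\<in>Pdag. emeasure P {\<omega>. \<tau> \<omega> < \<infinity>} \<le> ennreal \<epsilon>)"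
proof -
  define E where "E k t = {\<omega>. 2 ^ Suc k / \<epsilon> \<le>
      exp (1 / real (Suc k) * partial_sum t \<omega> - (1 / real (Suc k))\<^sup>2 * real t / 2)}" for k t
  define \<tau> where "\<tau> = hitting_time (\<lambda>t. \<Union>k. E k t)"
  have E_filt: "E k t \<in> sets (filt t)" for k t
  proof -
    have [measurable]: "partial_sum t \<in> borel_measurable (filt t)"
      by (rule borel_measurable_partial_sum_filt)
    have "{\<omega>\<in>space (filt t). \<omega> \<in> E k t} \<in> sets (filt t)"
      unfolding E_def by measurable
    then show ?thesis
      by simp
  qed
  have finite_iff: "{\<omega>. \<tau> \<omega> < \<infinity>} = (\<Union>k. \<Union>t. E k t)"
    unfolding \<tau>_def hitting_time_less_infinity_iff by blast
  have "stopping_time_filt \<tau>"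
    unfolding \<tau>_def using E_filt by (intro stopping_time_filt_hitting_time sets.countable_UN) auto
  moreover have "Apos \<subseteq> {\<omega>. \<tau> \<omega> < \<infinity>}"
  proof
    fix \<omega> assume "\<omega> \<in> Apos"
    then have "0 < limsup (\<lambda>t. ereal (partial_sum t \<omega> / real t))"
      by (simp add: Apos_def partial_sum_def)
    then obtain \<delta> where \<delta>: "0 < ereal \<delta>" "ereal \<delta> < limsup (\<lambda>t. ereal (partial_sum t \<omega> / real t))"
      using ereal_dense2 by blast
    moreover obtain k where "1 / real (Suc k) < \<delta>"
      using \<delta>(1) reals_Archimedean[of \<delta>] by (auto simp: inverse_eq_divide)
    ultimately have "ereal (1 / real (Suc k)) < limsup (\<lambda>t. ereal (partial_sum t \<omega> / real t))"
      using order.strict_trans[of "ereal (1 / real (Suc k))" "ereal \<delta>"] by simp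
    from exp_crossing_of_less_limsup[OF _ this] obtain t where "\<omega> \<in> E k t"
      unfolding E_def by fastforce
    then show "\<omega> \<in> {\<omega>. \<tau> \<omega> < \<infinity>}"
      unfolding finite_iff by blast
  qed
  moreover have "emeasure P {\<omega>. \<tau> \<omega> < \<infinity>} \<le> ennreal \<epsilon>" if P: "P \<in> Pdag" for P
    unfolding finite_iff
  proof (rule emeasure_UN_le_of_le_geometric)
    fix k
    show "(\<Union>t. E k t) \<in> sets P"
      using E_filt sets_filt_subset_Fall sets_Pdag[OF P] by (intro sets.countable_UN) auto
    have "(\<Union>t. E k t) = {\<omega>. \<exists>t. 2 ^ Suc k / \<epsilon> \<le>
        exp (1 / real (Suc k) * partial_sum t \<omega> - (1 / real (Suc k))\<^sup>2 * real t / 2)}"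
      by (auto simp: E_def)
    also have "emeasure P \<dots> \<le> ennreal (1 / (2 ^ Suc k / \<epsilon>))"
      using \<epsilon> by (intro emeasure_exp_partial_sum_crossing_le[OF P]) auto
    finally show "emeasure P (\<Union>t. E k t) \<le> ennreal (\<epsilon> * (1/2) ^ Suc k)"
      by (simp add: power_one_over field_simps)
  qed (use \<epsilon> in simp)
  ultimately show ?thesis
    by blast
qed

lemma inv_cap_eq_0I:
  assumes "\<And>\<epsilon>. 0 < \<epsilon> \<Longrightarrow> \<exists>\<tau>. stopping_time_filt \<tau> \<and> B \<subseteq> {\<omega>. \<tau> \<omega> < \<infinity>}
             \<and> (\<forall>P\<in>Q. emeasure P {\<omega>. \<tau> \<omega> < \<infinity>} \<le> ennreal \<epsilon>)"
  shows "inv_cap Q B = 0"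
proof -
  have "inv_cap Q B \<le> 0 + ennreal \<epsilon>" if "0 < \<epsilon>" for \<epsilon>
  proof -
    obtain \<tau> where \<tau>: "stopping_time_filt \<tau>" "B \<subseteq> {\<omega>. \<tau> \<omega> < \<infinity>}"
      "\<forall>P\<in>Q. emeasure P {\<omega>. \<tau> \<omega> < \<infinity>} \<le> ennreal \<epsilon>"
      using assms[OF \<open>0 < \<epsilon>\<close>] by blast
    then have "inv_cap Q B \<le> (SUP P\<in>Q. emeasure P {\<omega>. \<tau> \<omega> < \<infinity>})"
      unfolding inv_cap_def by (intro INF_lower) auto
    also have "\<dots> \<le> ennreal \<epsilon>"
      using \<tau>(3) by (intro SUP_least) auto
    finally show ?thesis by simp
  qed
  then show ?thesis
    by (metis ennreal_le_epsilon le_zero_eq)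
qed

theorem mainTheorem13:
  shows "inv_cap Pdag Apos = 0 \<and> Ple0 \<subseteq> Pdag \<and> inv_cap Ple0 Apos = 0"
proof -
  have "Ple0 \<subseteq> Pdag"
    unfolding Ple0_def by blast
  moreover have "inv_cap Q Apos = 0" if "Q \<subseteq> Pdag" for Q
    using Apos_small_stopping_time that by (intro inv_cap_eq_0I) blast
  ultimately show ?thesis
    by blast
qed

end
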